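(* Let $X$ satisfy the IHR assumption with hazard-rate lower bound $L>0$, let $n\ge 2$, let $X_1,\dots,X_n$ be i.i.d. copies of $X$ with order statistics $X_{(1)}\ge\cdots\ge X_{(n)}$, and let $k\in\{1,\dots,n-1\}$. Define $v^r:=\frac{2}{kL^2}$ and $c^r:=\frac{2}{kL}$. Then for all $\lambda\in[0,1/c^r)$, $$\log \mathbb{E}\big[\exp\big(\lambda(X_{(k)}-\mathbb{E}[X_{(k)}])\big)\big]\le \frac{\lambda^2 v^r}{2(1-c^r\lambda)},$$ and for all $\gamma\ge 0$, $$\mathbb{P}\Big(X_{(k)}-\mathbb{E}[X_{(k)}]\ge \sqrt{2v^r\gamma}+c^r\gamma\Big)\le e^{-\gamma}.$$
   Context: $X$ is a continuous real random variable with support $[0,\infty)$, density $f$ and c.d.f. $F$. Its hazard rate is $h(x)=f(x)/(1-F(x))$. IHR assumption: $h$ is non-decreasing on $[0,\infty)$ (i.e. $h(x_1)\ge h(x_2)$ whenever $x_1\ge x_2\ge 0$) and $L:=\inf_x h(x)>0$. For i.i.d. samples $X_1,\dots,X_n$, the order statistics $X_{(1)}\ge X_{(2)}\ge\cdots\ge X_{(n)}$ are the samples sorted in decreasing order ($X_{(1)}$ is the maximum); $X_{(k)}$ is called the rank-$k$ order statistic. *)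

theory Defs
  imports "HOL-Probability.Probability"
begin

text \<open>The rank-k order statistic (k-th largest, k = 1 is the maximum) of the
  n values x 0, ..., x (n-1).\<close>
definition order_stat :: "nat \<Rightarrow> nat \<Rightarrow> (nat \<Rightarrow> real) \<Rightarrow> real" where
  "order_stat n k x = rev (sort (map x [0..<n])) ! (k - 1)"

definition hazard :: "(real \<Rightarrow> real) \<Rightarrow> (real \<Rightarrow> real) \<Rightarrow> real \<Rightarrow> real" where
  "hazard f F x = f x / (1 - F x)"

end

(*
  Let G = 1 - F be the survival function. Since the G(X_i) are i.i.d. uniform and G is
  decreasing, Q = G(X_(k)) has the Beta(k, n - k + 1) distribution, so S = - ln Q has the
  explicit exponential moments E[Q powr (- mu)] = prod_j (k + j) / (k + j - mu) and mean at
  least sum_j 1 / (k + j). A hazard rate of at least L means - ln G grows with slope at least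
  L, so X_(k) = S / L - D(X_(k)) where D(y) = - ln G(y) / L - y is nondecreasing and
  nonnegative on [0, inf). By Chebyshev's association inequality exp(l X_(k)) and D(X_(k))
  are positively correlated, whence the centred exponential moment of l X_(k) is at most that
  of (l / L) S. The latter is bounded with - ln (1 - x) - x <= x^2 / (2 (1 - x)) and
  sum_j 1 / (k + j)^2 <= 2 / k, and the tail bound follows by the Chernoff method.
*)
theory Submission
  imports Defs
begin

section \<open>Order statistics as counts\<close>

lemma sorted_le_nth_iff_length_filter:
  fixes ys :: "'a::linorder list"
  assumes "sorted ys" "i < length ys"
  shows "t \<le> ys ! i \<longleftrightarrow> length ys - i \<le> length (filter (\<lambda>x. t \<le> x) ys)"
proof -
  let ?P = "{j. j < length ys \<and> t \<le> ys ! j}"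
  have len: "length (filter (\<lambda>x. t \<le> x) ys) = card ?P"
    by (rule length_filter_conv_card)
  show ?thesis
  proof
    assume "t \<le> ys ! i"
    then have "{i..<length ys} \<subseteq> ?P"
      using sorted_nth_mono[OF assms(1), of i] by (auto intro: order.trans)
    then show "length ys - i \<le> length (filter (\<lambda>x. t \<le> x) ys)"
      unfolding len using card_mono[of ?P "{i..<length ys}"] by simp
  next
    assume card: "length ys - i \<le> length (filter (\<lambda>x. t \<le> x) ys)"
    show "t \<le> ys ! i"
    proof (rule ccontr)
      assume "\<not> t \<le> ys ! i"
      then have "?P \<subseteq> {Suc i..<length ys}"
        using sorted_nth_mono[OF assms(1), of _ i] assms(2)
        by (auto simp: Suc_le_eq) (meson not_le order.trans)
      then have "card ?P \<le> length ys - Suc i"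
        using card_mono[of "{Suc i..<length ys}" ?P] by simp
      then show False using card assms(2) unfolding len by linarith
    qed
  qed
qed

lemma le_order_stat_iff_card:
  assumes "1 \<le> k" "k \<le> n"
  shows "t \<le> order_stat n k x \<longleftrightarrow> k \<le> card {i\<in>{..<n}. t \<le> x i}"
proof -
  let ?xs = "map x [0..<n]"
  have "order_stat n k x = sort ?xs ! (n - k)"
    unfolding order_stat_def using assms by (simp add: rev_nth)
  moreover have "length (filter (\<lambda>y. t \<le> y) (sort ?xs)) = length (filter (\<lambda>y. t \<le> y) ?xs)"
    by (simp add: filter_sort)
  moreover have "length (filter (\<lambda>y. t \<le> y) ?xs) = card {i\<in>{..<n}. t \<le> x i}"
    unfolding length_filter_conv_card by (intro arg_cong[where f=card]) auto
  ultimately show ?thesis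
    using sorted_le_nth_iff_length_filter[of "sort ?xs" "n - k" t] assms by simp
qed

lemma minus_ln_one_minus_le:
  fixes x :: real
  assumes "0 \<le> x" "x < 1"
  shows "- ln (1 - x) - x \<le> x\<^sup>2 / (2 * (1 - x))"
proof -
  define g where "g y = y + y\<^sup>2 / (2 * (1 - y)) + ln (1 - y)" for y :: real
  have g_deriv: "(g has_real_derivative y\<^sup>2 / (2 * (1 - y)\<^sup>2)) (at y)" if "y < 1" for y
  proof -
    have "(g has_real_derivative
        1 + ((2*y) * (2 * (1 - y)) - y\<^sup>2 * (2 * (-1))) / (2 * (1 - y))\<^sup>2 + (-1) / (1 - y)) (at y)"
      unfolding g_def using that by (auto intro!: derivative_eq_intros simp: power2_eq_square)
    moreover have "1 + ((2*y) * (2 * (1 - y)) - y\<^sup>2 * (2 * (-1))) / (2 * (1 - y))\<^sup>2 + (-1) / (1 - y)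
        = y\<^sup>2 / (2 * (1 - y)\<^sup>2)"
    proof -
      have "1 - y \<noteq> 0" using that by simp
      then show ?thesis by (simp add: divide_simps power2_eq_square) (simp add: algebra_simps)
    qed
    ultimately show ?thesis by simp
  qed
  have "g 0 \<le> g x"
  proof (rule DERIV_nonneg_imp_nondecreasing[OF assms(1)])
    fix y assume "0 \<le> y" "y \<le> x"
    then have "y < 1" using assms by simp
    then show "\<exists>z. (g has_real_derivative z) (at y) \<and> 0 \<le> z"
      using g_deriv by (intro exI[of _ "y\<^sup>2 / (2 * (1 - y)\<^sup>2)"]) auto
  qed
  then show ?thesis unfolding g_def by simp
qed

lemma sum_inverse_square_le:
  assumes "1 \<le> k"
  shows "(\<Sum>j\<le>m. 1 / (real k + real j)\<^sup>2) \<le> 2 / real k - 1 / (real k + real m)"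
proof (induction m)
  case 0
  show ?case using assms by (simp add: power2_eq_square field_simps)
next
  case (Suc m)
  define N where "N = real k + real m"
  have N: "N > 0" using assms unfolding N_def by simp
  have "1 / (N + 1)\<^sup>2 \<le> 1 / (N * (N + 1))"
    using N by (intro divide_left_mono) (auto simp: power2_eq_square)
  also have "\<dots> = 1 / N - 1 / (N + 1)"
    using N by (simp add: field_simps)
  finally show ?case using Suc unfolding N_def by (simp add: add_ac)
qed

lemma Beta_plus_nat:
  fixes x :: real
  assumes "x > 0"
  shows "Beta x (real m + 1) = fact m / (\<Prod>j\<le>m. (x + real j))"
proof (induction m)
  case 0
  have "x \<notin> \<int>\<^sub>\<le>\<^sub>0" using assms by (auto elim!: nonpos_Ints_cases)
  moreover have "Gamma x \<noteq> 0" using Gamma_real_pos[OF assms] by linarith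
  ultimately have "Gamma x / Gamma (x + 1) = 1 / x"
    using assms by (subst Gamma_plus1) (simp_all add: field_simps)
  then show ?case unfolding Beta_def by simp
next
  case (Suc m)
  have "real m + 1 \<notin> \<int>\<^sub>\<le>\<^sub>0" by (auto elim!: nonpos_Ints_cases)
  then have "(x + (real m + 1)) * Beta x (real m + 1 + 1) = (real m + 1) * Beta x (real m + 1)"
    by (rule Beta_plus1_right)
  then have "Beta x (real (Suc m) + 1) = (real m + 1) * Beta x (real m + 1) / (x + (real m + 1))"
    using assms by (simp add: field_simps)
  also have "\<dots> = fact (Suc m) / ((\<Prod>j\<le>m. (x + real j)) * (x + real (Suc m)))"
    using Suc by (simp add: field_simps)
  finally show ?case by simp
qed

lemma prod_shift_times_fact:
  "(\<Prod>j\<le>m. (real k + 1 + real j)) * fact k = fact (k + m + 1)"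
proof (induction m)
  case (Suc m)
  have "(\<Prod>j\<le>Suc m. (real k + 1 + real j)) * fact k =
      (real k + 1 + real (Suc m)) * ((\<Prod>j\<le>m. (real k + 1 + real j)) * fact k)"
    by (simp add: algebra_simps)
  also have "\<dots> = fact (k + Suc m + 1)" using Suc by (simp add: algebra_simps)
  finally show ?case .
qed (simp add: algebra_simps)

lemma binomial_Beta_eq_prod:
  fixes a :: real
  assumes "1 \<le> k" "k \<le> n" "real k + a > 0"
  shows "real n * real (n - 1 choose (k - 1)) * Beta (real k + a) (real (n - k) + 1)
       = (\<Prod>j\<le>n-k. (real k + real j) / (real k + real j + a))"
proof -
  define m where "m = n - k"
  define k' where "k' = k - 1"
  have kk: "k = k' + 1" "n = k' + m + 1" using assms unfolding m_def k'_def by auto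
  have "fact k' * fact m * (n - 1 choose k') = (fact (n - 1) :: nat)"
    using binomial_fact_lemma[of k' "n - 1"] kk by simp
  then have "fact k' * fact m * real (n - 1 choose k') = fact (n - 1)"
    by (metis of_nat_fact of_nat_mult)
  then have "real n * real (n - 1 choose k') * fact m * fact k' = real n * fact (n - 1)"
    by (simp add: ac_simps)
  also have "\<dots> = fact (k' + m + 1)" using kk by (simp add: fact_reduce[of n])
  also have "\<dots> = (\<Prod>j\<le>m. (real k + real j)) * fact k'"
    unfolding prod_shift_times_fact[symmetric] kk by (simp add: add_ac)
  finally have "real n * real (n - 1 choose k') * fact m = (\<Prod>j\<le>m. (real k + real j))"
    by simp
  moreover have "Beta (real k + a) (real m + 1) = fact m / (\<Prod>j\<le>m. (real k + a + real j))"
    using assms by (intro Beta_plus_nat) simp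
  ultimately show ?thesis
    unfolding m_def[symmetric] k'_def[symmetric]
    by (simp add: field_simps prod_dividef algebra_simps)
qed

lemma sum_ln_ratio_le:
  fixes \<nu> :: real
  assumes "1 \<le> k" "0 < \<nu>" "\<nu> \<le> 1"
  shows "(\<Sum>j\<le>m. ln ((real k + real j) / (real k + real j + \<nu>)))
       \<le> - \<nu> * (\<Sum>j\<le>m. 1 / (real k + real j)) + 2 * \<nu>\<^sup>2"
proof -
  have "(\<Sum>j\<le>m. ln ((real k + real j) / (real k + real j + \<nu>)))
      \<le> (\<Sum>j\<le>m. \<nu>\<^sup>2 * (1 / (real k + real j)\<^sup>2) - \<nu> * (1 / (real k + real j)))"
  proof (rule sum_mono)
    fix j
    define x where "x = \<nu> / (real k + real j)"
    have x: "0 \<le> x" "x \<le> 1" unfolding x_def using assms by (auto simp: divide_le_eq)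
    have "ln ((real k + real j) / (real k + real j + \<nu>)) = - ln (1 + x)"
      unfolding x_def using assms by (simp add: ln_div field_simps)
    also have "\<dots> \<le> - (x - x\<^sup>2)" using ln_one_plus_pos_lower_bound[OF x] by simp
    finally show "ln ((real k + real j) / (real k + real j + \<nu>))
        \<le> \<nu>\<^sup>2 * (1 / (real k + real j)\<^sup>2) - \<nu> * (1 / (real k + real j))"
      unfolding x_def by (simp add: power_divide)
  qed
  also have "\<dots> = \<nu>\<^sup>2 * (\<Sum>j\<le>m. 1 / (real k + real j)\<^sup>2) - \<nu> * (\<Sum>j\<le>m. 1 / (real k + real j))"
    by (simp only: sum_subtractf sum_distrib_left)
  also have "\<dots> \<le> \<nu>\<^sup>2 * 2 - \<nu> * (\<Sum>j\<le>m. 1 / (real k + real j))"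
  proof -
    have "2 / real k \<le> 2" using assms(1) by (simp add: divide_le_eq)
    moreover have "0 \<le> 1 / (real k + real m)" by simp
    ultimately have "(\<Sum>j\<le>m. 1 / (real k + real j)\<^sup>2) \<le> 2"
      using sum_inverse_square_le[OF assms(1), of m] by linarith
    then show ?thesis by (simp add: mult_left_mono)
  qed
  finally show ?thesis by simp
qed

lemma sum_ln_mgf_le:
  fixes \<mu> :: real
  assumes "1 \<le> k" "0 < \<mu>" "\<mu> < real k"
  shows "(\<Sum>j\<le>m. ln ((real k + real j) / (real k + real j - \<mu>)) - \<mu> / (real k + real j))
       \<le> \<mu>\<^sup>2 / (real k - \<mu>)"
proof -
  define C where "C = \<mu>\<^sup>2 / (2 * (1 - \<mu> / real k))"
  have \<mu>k: "\<mu> / real k < 1" using assms by (simp add: divide_less_eq)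
  have "(\<Sum>j\<le>m. ln ((real k + real j) / (real k + real j - \<mu>)) - \<mu> / (real k + real j))
      \<le> (\<Sum>j\<le>m. C * (1 / (real k + real j)\<^sup>2))"
  proof (rule sum_mono)
    fix j
    define x where "x = \<mu> / (real k + real j)"
    have x0: "0 \<le> x" unfolding x_def using assms by simp
    have xk: "x \<le> \<mu> / real k" unfolding x_def using assms by (intro divide_left_mono) auto
    have "ln ((real k + real j) / (real k + real j - \<mu>)) = - ln (1 - x)"
      unfolding x_def using assms by (simp add: ln_div field_simps)
    then have "ln ((real k + real j) / (real k + real j - \<mu>)) - x \<le> x\<^sup>2 / (2 * (1 - x))"
      using minus_ln_one_minus_le[OF x0] xk \<mu>k by simp
    also have "\<dots> \<le> x\<^sup>2 / (2 * (1 - \<mu> / real k))"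
      using xk \<mu>k by (intro divide_left_mono mult_left_mono) auto
    finally show "ln ((real k + real j) / (real k + real j - \<mu>)) - \<mu> / (real k + real j)
        \<le> C * (1 / (real k + real j)\<^sup>2)"
      unfolding x_def C_def by (simp add: power_divide mult.commute)
  qed
  also have "\<dots> = C * (\<Sum>j\<le>m. 1 / (real k + real j)\<^sup>2)"
    by (simp add: sum_distrib_left)
  also have "\<dots> \<le> C * (2 / real k)"
  proof (rule mult_left_mono)
    have "0 \<le> 1 / (real k + real m)" by simp
    then show "(\<Sum>j\<le>m. 1 / (real k + real j)\<^sup>2) \<le> 2 / real k"
      using sum_inverse_square_le[OF assms(1), of m] by linarith
    show "0 \<le> C" unfolding C_def using \<mu>k by (auto intro!: divide_nonneg_pos)
  qed
  also have "\<dots> = \<mu>\<^sup>2 / (real k - \<mu>)"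
    unfolding C_def using assms by (simp add: field_simps)
  finally show ?thesis .
qed

section \<open>The Beta distribution as a law of order statistics\<close>

definition binomial_tail :: "nat \<Rightarrow> nat \<Rightarrow> real \<Rightarrow> real" where
  "binomial_tail n k q = (\<Sum>j\<in>{k..n}. real (n choose j) * q ^ j * (1 - q) ^ (n - j))"

text \<open>Beta(k, n - k + 1) density, the law of the k-th smallest of n independent uniform samples.\<close>
definition beta_density :: "nat \<Rightarrow> nat \<Rightarrow> real \<Rightarrow> real" where
  "beta_density n k q = real n * real (n - 1 choose (k - 1)) * q ^ (k - 1) * (1 - q) ^ (n - k)"

definition beta_distr :: "nat \<Rightarrow> nat \<Rightarrow> real measure" where
  "beta_distr n k = density lborel (\<lambda>q. ennreal (indicator {0..1} q * beta_density n k q))"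

lemma binomial_tail_has_real_derivative:
  assumes "k \<le> n" "1 \<le> k"
  shows "(binomial_tail n k has_real_derivative beta_density n k q) (at q)"
  using assms
proof (induction k rule: inc_induct)
  case base
  have "binomial_tail n n = (\<lambda>q. q ^ n)" unfolding binomial_tail_def by (simp add: fun_eq_iff)
  moreover have "beta_density n n q = real n * q ^ (n - 1)" unfolding beta_density_def by simp
  ultimately show ?case by (auto intro!: derivative_eq_intros)
next
  case (step k)
  obtain a where a: "k = Suc a" using step.prems by (cases k) auto
  obtain b where b: "n - k = Suc b" using step.hyps by (cases "n - k") auto
  have split: "binomial_tail n k
      = (\<lambda>q. real (n choose k) * q ^ k * (1 - q) ^ (n - k) + binomial_tail n (Suc k) q)"
    unfolding binomial_tail_def using step.hyps by (simp add: fun_eq_iff sum.atLeast_Suc_atMost)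
  have term_deriv: "((\<lambda>q. real (n choose k) * q ^ k * (1 - q) ^ (n - k)) has_real_derivative
      real (n choose k) * (real k * q ^ a * (1 - q) ^ Suc b - real (Suc b) * q ^ k * (1 - q) ^ b)) (at q)"
    unfolding b by (rule derivative_eq_intros refl)+ (simp add: a algebra_simps)
  have c1: "real (n choose k) * real k = real n * real (n - 1 choose a)"
    using binomial_absorption[of a n] unfolding a by (metis of_nat_mult mult.commute)
  have c2: "real (n choose k) * real (Suc b) = real n * real (n - 1 choose k)"
    using binomial_absorb_comp[of n k] unfolding b by (metis of_nat_mult mult.commute)
  have dk: "beta_density n k q = real n * real (n - 1 choose a) * q ^ a * (1 - q) ^ Suc b"
    unfolding beta_density_def a using b a by simp
  have dk1: "beta_density n (Suc k) q = real n * real (n - 1 choose k) * q ^ k * (1 - q) ^ b"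
  proof -
    have "n - Suc k = b" using b by arith
    then show ?thesis unfolding beta_density_def by simp
  qed
  have "real (n choose k) * (real k * q ^ a * (1 - q) ^ Suc b - real (Suc b) * q ^ k * (1 - q) ^ b)
        + beta_density n (Suc k) q = beta_density n k q"
    unfolding dk dk1 c1[symmetric] c2[symmetric] by (simp add: algebra_simps)
  then show ?case unfolding split using DERIV_add[OF term_deriv step.IH] by simp
qed

lemma binomial_tail_0: "1 \<le> k \<Longrightarrow> binomial_tail n k 0 = 0"
  unfolding binomial_tail_def by (intro sum.neutral) auto

lemma binomial_tail_1: "k \<le> n \<Longrightarrow> binomial_tail n k 1 = 1"
proof -
  assume "k \<le> n"
  have "binomial_tail n k 1 = (\<Sum>j\<in>{k..n}. if j = n then 1 else 0)"
    unfolding binomial_tail_def by (intro sum.cong) auto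
  also have "\<dots> = 1" using \<open>k \<le> n\<close> by simp
  finally show ?thesis .
qed

lemma beta_density_nonneg: "0 \<le> q \<Longrightarrow> q \<le> 1 \<Longrightarrow> 0 \<le> beta_density n k q"
  unfolding beta_density_def by simp

lemma beta_density_has_integral:
  assumes "1 \<le> k" "k \<le> n" "0 \<le> q"
  shows "(beta_density n k has_integral binomial_tail n k q) {0..q}"
proof -
  have "(beta_density n k has_integral (binomial_tail n k q - binomial_tail n k 0)) {0..q}"
    by (rule fundamental_theorem_of_calculus[OF assms(3)])
       (auto simp: has_real_derivative_iff_has_vector_derivative[symmetric]
             intro!: DERIV_subset[OF binomial_tail_has_real_derivative[OF assms(2,1)]])
  then show ?thesis using binomial_tail_0[OF assms(1)] by simp
qed

lemma beta_density_measurable[measurable]: "beta_density n k \<in> borel_measurable borel"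
  unfolding beta_density_def by measurable

lemma emeasure_beta_distr_atMost:
  assumes "1 \<le> k" "k \<le> n"
  shows "emeasure (beta_distr n k) {..q} = ennreal (binomial_tail n k (max 0 (min q 1)))"
proof -
  define q' where "q' = max 0 (min q 1)"
  have "emeasure (beta_distr n k) {..q}
      = (\<integral>\<^sup>+x. ennreal (indicator {0..1} x * beta_density n k x) * indicator {..q} x \<partial>lborel)"
    unfolding beta_distr_def by (subst emeasure_density) auto
  also have "\<dots> = (\<integral>\<^sup>+x. ennreal (beta_density n k x) * indicator {0..q'} x \<partial>lborel)"
    by (intro nn_integral_cong_AE, rule AE_mp[OF AE_lborel_singleton[of 0]])
       (auto simp: indicator_def q'_def)
  also have "\<dots> = ennreal (binomial_tail n k q')"
    by (rule nn_integral_has_integral_lebesgue')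
       (auto simp: q'_def intro!: beta_density_nonneg beta_density_has_integral assms)
  finally show ?thesis unfolding q'_def .
qed

lemma real_distribution_beta_distr:
  assumes "1 \<le> k" "k \<le> n"
  shows "real_distribution (beta_distr n k)"
proof -
  have "emeasure (beta_distr n k) UNIV = emeasure (beta_distr n k) {..1}"
    unfolding beta_distr_def
    by (subst (1 2) emeasure_density) (auto intro!: nn_integral_cong simp: indicator_def)
  then have "prob_space (beta_distr n k)"
    using emeasure_beta_distr_atMost[OF assms, of 1] binomial_tail_1[OF assms(2)]
    by (intro prob_spaceI) (simp add: beta_distr_def)
  then show ?thesis
    unfolding real_distribution_def real_distribution_axioms_def by (simp add: beta_distr_def)
qed

lemma beta_density_mult_powr:
  fixes a :: real
  assumes "1 \<le> k" "0 < x" "x < 1"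
  shows "beta_density n k x * x powr a
       = real n * real (n - 1 choose (k - 1)) * (x powr (real k + a - 1) * (1 - x) powr (real (n - k) + 1 - 1))"
  unfolding beta_density_def using assms
  by (simp add: powr_realpow[symmetric] powr_add[symmetric] of_nat_diff algebra_simps)

lemma nn_integral_beta_distr_powr:
  assumes "1 \<le> k" "k \<le> n" "real k + a > 0"
  shows "(\<integral>\<^sup>+x. ennreal (x powr a) \<partial>beta_distr n k)
       = ennreal (\<Prod>j\<le>n-k. (real k + real j) / (real k + real j + a))"
proof -
  define c where "c = real n * real (n - 1 choose (k - 1))"
  have "(\<integral>\<^sup>+x. ennreal (x powr a) \<partial>beta_distr n k)
      = (\<integral>\<^sup>+x. ennreal (indicator {0..1} x * beta_density n k x) * ennreal (x powr a) \<partial>lborel)"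
    unfolding beta_distr_def by (subst nn_integral_density) auto
  also have "\<dots> = (\<integral>\<^sup>+x. ennreal (c * (x powr (real k + a - 1) * (1 - x) powr (real (n - k) + 1 - 1)))
                        * indicator {0..1} x \<partial>lborel)"
  proof (intro nn_integral_cong_AE, rule AE_mp[OF AE_lborel_singleton[of 0]],
         rule AE_mp[OF AE_lborel_singleton[of 1]], intro AE_I2 impI)
    fix x :: real assume "x \<noteq> 0" "x \<noteq> 1"
    then show "ennreal (indicator {0..1} x * beta_density n k x) * ennreal (x powr a)
        = ennreal (c * (x powr (real k + a - 1) * (1 - x) powr (real (n - k) + 1 - 1))) * indicator {0..1} x"
      using beta_density_mult_powr[OF assms(1), where x=x and a=a and n=n] beta_density_nonneg[of x n k]
      unfolding c_def by (auto simp: indicator_def ennreal_mult[symmetric])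
  qed
  also have "\<dots> = ennreal (c * Beta (real k + a) (real (n - k) + 1))"
  proof (rule nn_integral_has_integral_lebesgue')
    show "((\<lambda>x. c * (x powr (real k + a - 1) * (1 - x) powr (real (n - k) + 1 - 1))) has_integral
        c * Beta (real k + a) (real (n - k) + 1)) {0..1}"
      by (rule has_integral_mult_right, rule has_integral_Beta_real) (use assms in auto)
  qed (auto simp: c_def)
  also have "c * Beta (real k + a) (real (n - k) + 1) = (\<Prod>j\<le>n-k. (real k + real j) / (real k + real j + a))"
    unfolding c_def by (rule binomial_Beta_eq_prod[OF assms])
  finally show ?thesis .
qed

lemma binomial_weight_Suc:
  fixes p :: real
  shows "p * (real (m choose j) * p ^ j * (1 - p) ^ (m - j))
       + (1 - p) * (real (m choose Suc j) * p ^ Suc j * (1 - p) ^ (m - Suc j))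
       = real (Suc m choose Suc j) * p ^ Suc j * (1 - p) ^ (Suc m - Suc j)"
proof (cases "j < m")
  case True
  then obtain r where r: "m - j = Suc r" by (cases "m - j") auto
  then have "m - Suc j = r" by simp
  then show ?thesis unfolding binomial_Suc_Suc of_nat_add using r by (simp add: algebra_simps)
next
  case False
  show ?thesis
  proof (cases "j = m")
    case False
    with \<open>\<not> j < m\<close> have "m < j" by simp
    then show ?thesis by (simp add: binomial_eq_0)
  qed simp
qed

lemma (in prob_space) prob_sum_indep_bernoulli:
  fixes Z :: "'i \<Rightarrow> 'a \<Rightarrow> real"
  assumes "finite J" and indep: "indep_vars (\<lambda>_. borel) Z J"
    and bernoulli: "\<And>i \<omega>. i \<in> J \<Longrightarrow> Z i \<omega> = 0 \<or> Z i \<omega> = 1"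
    and success: "\<And>i. i \<in> J \<Longrightarrow> prob {\<omega> \<in> space M. Z i \<omega> = 1} = p"
  shows "prob {\<omega> \<in> space M. (\<Sum>i\<in>J. Z i \<omega>) = real j}
       = real (card J choose j) * p ^ j * (1 - p) ^ (card J - j)"
  using assms
proof (induction J arbitrary: j rule: finite_induct)
  case empty
  show ?case by (cases j) (auto simp: prob_space)
next
  case (insert i J)
  let ?S = "\<lambda>\<omega>. \<Sum>i\<in>J. Z i \<omega>"
  have [measurable]: "Z i \<in> borel_measurable M" "\<And>i. i \<in> J \<Longrightarrow> Z i \<in> borel_measurable M"
    using insert.prems(1) by (auto simp: indep_vars_def)
  have IH: "prob {\<omega> \<in> space M. ?S \<omega> = real j} = real (card J choose j) * p ^ j * (1 - p) ^ (card J - j)"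
    for j using insert by (auto intro: indep_vars_subset[OF insert.prems(1)])
  have joint: "prob {\<omega> \<in> space M. Z i \<omega> = a \<and> ?S \<omega> = b}
      = prob {\<omega> \<in> space M. Z i \<omega> = a} * prob {\<omega> \<in> space M. ?S \<omega> = b}" for a b
  proof -
    have "indep_var borel (Z i) borel ?S"
      using insert.hyps insert.prems(1) by (rule indep_vars_sum)
    from indep_varD[OF this, of "{a}" "{b}"] show ?thesis
      by (simp add: vimage_def Int_def conj_commute)
  qed
  have Z1: "prob {\<omega> \<in> space M. Z i \<omega> = 1} = p" using insert.prems(3) by simp
  have Z0: "prob {\<omega> \<in> space M. Z i \<omega> = 0} = 1 - p"
  proof -
    have "{\<omega> \<in> space M. Z i \<omega> = 0} = space M - {\<omega> \<in> space M. Z i \<omega> = 1}"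
      using insert.prems(2) by force
    then show ?thesis using Z1 by (simp add: prob_compl)
  qed
  have S_nonneg: "0 \<le> ?S \<omega>" for \<omega>
    using insert.prems(2) by (intro sum_nonneg) (metis insertCI order.refl zero_le_one)
  have sum_insert: "(\<Sum>i\<in>insert i J. Z i \<omega>) = Z i \<omega> + ?S \<omega>" for \<omega>
    using insert.hyps by simp
  show ?case
  proof (cases j)
    case 0
    have "{\<omega> \<in> space M. (\<Sum>i\<in>insert i J. Z i \<omega>) = real j} = {\<omega> \<in> space M. Z i \<omega> = 0 \<and> ?S \<omega> = 0}"
    proof -
      have "0 \<le> Z i \<omega>" for \<omega> by (metis insert.prems(2) insertI1 order.refl zero_le_one)
      then show ?thesis unfolding sum_insert 0 using add_nonneg_eq_0_iff S_nonneg by auto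
    qed
    then show ?thesis using joint[of 0 0] Z0 IH[of 0] 0 insert.hyps by simp
  next
    case (Suc j')
    have "{\<omega> \<in> space M. (\<Sum>i\<in>insert i J. Z i \<omega>) = real j}
        = {\<omega> \<in> space M. Z i \<omega> = 1 \<and> ?S \<omega> = real j'} \<union> {\<omega> \<in> space M. Z i \<omega> = 0 \<and> ?S \<omega> = real j}"
    proof -
      have "Z i \<omega> + s = real (Suc j') \<longleftrightarrow> Z i \<omega> = 1 \<and> s = real j' \<or> Z i \<omega> = 0 \<and> s = real (Suc j')"
        for \<omega> s using insert.prems(2)[of i \<omega>] by auto
      then show ?thesis unfolding sum_insert Suc by blast
    qed
    then have "prob {\<omega> \<in> space M. (\<Sum>i\<in>insert i J. Z i \<omega>) = real j}
        = prob {\<omega> \<in> space M. Z i \<omega> = 1 \<and> ?S \<omega> = real j'} + prob {\<omega> \<in> space M. Z i \<omega> = 0 \<and> ?S \<omega> = real j}"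
      by (simp only:) (subst finite_measure_Union, auto)
    also have "\<dots> = p * (real (card J choose j') * p ^ j' * (1 - p) ^ (card J - j'))
        + (1 - p) * (real (card J choose j) * p ^ j * (1 - p) ^ (card J - j))"
      using joint Z0 Z1 IH by simp
    finally show ?thesis using binomial_weight_Suc[of p "card J" j'] insert.hyps Suc by simp
  qed
qed

lemma (in prob_space) exp_integral_le_integral_exp:
  fixes Z :: "'a \<Rightarrow> real"
  assumes "integrable M Z" "integrable M (\<lambda>\<omega>. exp (Z \<omega>))"
  shows "exp (\<integral>\<omega>. Z \<omega> \<partial>M) \<le> (\<integral>\<omega>. exp (Z \<omega>) \<partial>M)"
  using jensens_inequality[of Z UNIV, OF assms(1) _ _ assms(2) exp_convex] by simp

lemma (in prob_space) covariance_monotone_nonneg: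
  fixes Y :: "'a \<Rightarrow> real" and g d :: "real \<Rightarrow> real"
  assumes Y_nonneg: "AE \<omega> in M. 0 \<le> Y \<omega>"
    and g_mono: "\<And>x y. x \<le> y \<Longrightarrow> g x \<le> g y"
    and d_mono: "\<And>x y. 0 \<le> x \<Longrightarrow> x \<le> y \<Longrightarrow> d x \<le> d y"
    and int_gd: "integrable M (\<lambda>\<omega>. g (Y \<omega>) * d (Y \<omega>))"
    and int_g: "integrable M (\<lambda>\<omega>. g (Y \<omega>))"
    and int_d: "integrable M (\<lambda>\<omega>. d (Y \<omega>))"
  shows "0 \<le> (\<integral>\<omega>. g (Y \<omega>) * (d (Y \<omega>) - (\<integral>\<omega>. d (Y \<omega>) \<partial>M)) \<partial>M)"
proof -
  define E where "E = (\<integral>\<omega>. d (Y \<omega>) \<partial>M)"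
  define T where "T = {y. 0 \<le> y \<and> E \<le> d y}"
  have "T \<noteq> {}"
  proof
    assume "T = {}"
    have "AE \<omega> in M. d (Y \<omega>) < E"
      using Y_nonneg by eventually_elim (use \<open>T = {}\<close> in \<open>auto simp: T_def\<close>)
    from expectation_less[OF int_d this] show False unfolding E_def by simp
  qed
  moreover have T_bdd: "bdd_below T" unfolding T_def by (intro bdd_belowI[of _ 0]) auto
  ultimately have "T \<noteq> {}" "bdd_below T" .
  define m where "m = Inf T"
  \<comment> \<open>m separates the arguments where d is below its mean from those where it is above,
    so (g y - g m) and (d y - E) always have the same sign.\<close>
  have same_sign: "0 \<le> (g y - g m) * (d y - E)" if "0 \<le> y" for y
  proof (cases y m rule: linorder_cases)
    case less
    then have "y \<notin> T" using cInf_lower[OF _ T_bdd, of y] unfolding m_def by auto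
    then show ?thesis using that less g_mono[of y m] unfolding T_def by (auto intro!: mult_nonpos_nonpos)
  next
    case greater
    then obtain y' where "y' \<in> T" "y' < y"
      using cInf_less_iff[OF \<open>T \<noteq> {}\<close> T_bdd] unfolding m_def by auto
    then show ?thesis
      using greater g_mono[of m y] d_mono[of y' y] unfolding T_def by (auto intro!: mult_nonneg_nonneg)
  qed simp
  have "0 \<le> (\<integral>\<omega>. (g (Y \<omega>) - g m) * (d (Y \<omega>) - E) \<partial>M)"
    by (rule integral_nonneg_AE) (use Y_nonneg same_sign in \<open>auto elim!: AE_mp\<close>)
  also have "\<dots> = (\<integral>\<omega>. g (Y \<omega>) * (d (Y \<omega>) - E) - g m * (d (Y \<omega>) - E) \<partial>M)"
    by (simp add: algebra_simps)
  also have "\<dots> = (\<integral>\<omega>. g (Y \<omega>) * (d (Y \<omega>) - E) \<partial>M) - g m * (\<integral>\<omega>. d (Y \<omega>) - E \<partial>M)"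
    using int_gd int_g int_d by (simp add: algebra_simps)
  also have "(\<integral>\<omega>. d (Y \<omega>) - E \<partial>M) = 0"
    using int_d by (simp add: prob_space E_def)
  finally show ?thesis unfolding E_def by simp
qed

lemma sub_gamma_exponent:
  fixes v c g :: real
  assumes v: "0 < v" and c: "0 < c" and g: "0 \<le> g"
  defines "r \<equiv> sqrt (2 * v * g)"
  defines "s \<equiv> r / v"
  defines "l \<equiv> s / (1 + c * s)"
  shows "l\<^sup>2 * v / (2 * (1 - c * l)) - l * (r + c * g) = - g"
proof -
  have gv: "0 \<le> 2 * v * g" using v g by simp
  have r2: "r\<^sup>2 = 2 * v * g" unfolding r_def using gv by (rule real_sqrt_pow2)
  have "0 \<le> s" unfolding s_def r_def using v g by simp
  then have d: "0 < 1 + c * s" using c by (simp add: add_pos_nonneg)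
  have cl: "1 - c * l = 1 / (1 + c * s)" unfolding l_def using d by (simp add: field_simps)
  have "l\<^sup>2 * v / (2 * (1 - c * l)) = (s\<^sup>2 / (1 + c * s)\<^sup>2) * v * (1 + c * s) / 2"
    unfolding cl unfolding l_def by (simp add: power_divide)
  also have "\<dots> = s\<^sup>2 * v / (2 * (1 + c * s))"
    using d by (simp add: power2_eq_square)
  also have "s\<^sup>2 * v = 2 * g" unfolding s_def using r2 v by (simp add: power_divide field_simps power2_eq_square)
  also have "2 * g / (2 * (1 + c * s)) = g / (1 + c * s)" using d by (auto simp: field_simps)
  finally have A: "l\<^sup>2 * v / (2 * (1 - c * l)) = g / (1 + c * s)" .
  have "s * r = 2 * g" unfolding s_def using r2 v by (simp add: field_simps power2_eq_square)
  then have B: "l * (r + c * g) = (2 * g + c * s * g) / (1 + c * s)"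
    unfolding l_def using d by (simp add: field_simps)
  have "g / (1 + c * s) - (2 * g + c * s * g) / (1 + c * s) = - g * (1 + c * s) / (1 + c * s)"
    by (simp add: diff_divide_distrib[symmetric] algebra_simps)
  then show ?thesis unfolding A B using d by simp
qed

lemma (in prob_space) sub_gamma_tail_bound:
  fixes W :: "'a \<Rightarrow> real"
  assumes v: "0 < v" and c: "0 < c" and g: "0 \<le> g"
    and mgf: "\<And>l. 0 < l \<Longrightarrow> l < 1 / c \<Longrightarrow> integrable M (\<lambda>\<omega>. exp (l * W \<omega>)) \<and>
       ln (\<integral>\<omega>. exp (l * W \<omega>) \<partial>M) \<le> l\<^sup>2 * v / (2 * (1 - c * l))"
  shows "prob {\<omega> \<in> space M. sqrt (2 * v * g) + c * g \<le> W \<omega>} \<le> exp (- g)"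
proof (cases "g = 0")
  case False
  \<comment> \<open>This choice of l makes the Chernoff exponent exactly - g, see sub_gamma_exponent.\<close>
  define r where "r = sqrt (2 * v * g)"
  define s where "s = r / v"
  define l where "l = s / (1 + c * s)"
  have "0 < s" unfolding s_def r_def using v g False by simp
  then have "c * l < 1" unfolding l_def using c by (simp add: divide_less_eq add_pos_pos)
  then have l: "0 < l" "l < 1 / c"
    unfolding l_def using \<open>0 < s\<close> c by (simp_all add: add_pos_pos field_simps)
  with mgf have int: "integrable M (\<lambda>\<omega>. exp (l * W \<omega>))"
    and ln_mgf: "ln (\<integral>\<omega>. exp (l * W \<omega>) \<partial>M) \<le> l\<^sup>2 * v / (2 * (1 - c * l))" by auto
  have "0 < (\<integral>\<omega>. exp (l * W \<omega>) \<partial>M)"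
    using expectation_less[of "\<lambda>\<omega>. - exp (l * W \<omega>)" 0] int by simp
  with ln_mgf have mgf_le: "(\<integral>\<omega>. exp (l * W \<omega>) \<partial>M) \<le> exp (l\<^sup>2 * v / (2 * (1 - c * l)))"
    by (metis exp_le_cancel_iff exp_ln)
  have "set_integrable M (space M) (\<lambda>\<omega>. exp (l * W \<omega>))"
    using int unfolding set_integrable_def
    by (rule Bochner_Integration.integrable_cong[THEN iffD1, rotated 2]) (auto simp: indicator_def)
  then have "prob {\<omega> \<in> space M. r + c * g \<le> W \<omega>}
      \<le> exp (- l * (r + c * g)) * (\<integral>\<omega>. exp (l * W \<omega>) \<partial>M)"
    using Chernoff_ineq_ge[OF l(1), of "space M" W] set_integral_space[OF int] by simp
  also have "\<dots> \<le> exp (- l * (r + c * g)) * exp (l\<^sup>2 * v / (2 * (1 - c * l)))"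
    using mgf_le by simp
  also have "\<dots> = exp (l\<^sup>2 * v / (2 * (1 - c * l)) - l * (r + c * g))"
    by (simp add: exp_add[symmetric])
  also have "\<dots> = exp (- g)"
    unfolding l_def s_def r_def by (subst sub_gamma_exponent[OF v c g]) simp
  finally show ?thesis unfolding r_def .
qed simp

section \<open>Samples with hazard rate bounded below\<close>

locale bounded_hazard_samples =
  fixes M :: "'a measure" and X :: "nat \<Rightarrow> 'a \<Rightarrow> real" and f :: "real \<Rightarrow> real" and L :: real
    and n k :: nat
  assumes prob: "prob_space M"
    and k1: "1 \<le> k" and k_le_n: "k \<le> n"
    and indep: "prob_space.indep_vars M (\<lambda>_. borel) X {..<n}"
    and dens: "\<And>i. i < n \<Longrightarrow> distributed M lborel (X i) (\<lambda>t. ennreal (f t))"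
    and f_nonneg: "\<And>t. f t \<ge> 0"
    and support_lo: "\<And>t. t < 0 \<Longrightarrow> f t = 0"
    and support_hi: "\<And>t. t \<ge> 0 \<Longrightarrow> measure M {\<omega> \<in> space M. X 0 \<omega> \<le> t} < 1"
    and L_le_hazard: "\<And>x. 0 \<le> x \<Longrightarrow> L \<le> hazard f (\<lambda>t. measure M {\<omega> \<in> space M. X 0 \<omega> \<le> t}) x"
    and L_pos: "L > 0"
begin

sublocale prob_space M by (rule prob)

definition F :: "real \<Rightarrow> real" where "F t = prob {\<omega> \<in> space M. X 0 \<omega> \<le> t}"
definition G :: "real \<Rightarrow> real" where "G t = 1 - F t"
definition h :: "real \<Rightarrow> real" where "h = hazard f F"

lemma n_pos: "0 < n" using k1 k_le_n by simp

lemma L_le_h: "0 \<le> a \<Longrightarrow> L \<le> h a"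
  using L_le_hazard unfolding h_def F_def[abs_def] .

lemma X_measurable[measurable]: "i < n \<Longrightarrow> X i \<in> borel_measurable M"
  using dens[of i] by (auto dest: distributed_measurable)

lemma f_measurable[measurable]: "f \<in> borel_measurable borel"
  using distributed_real_measurable[OF _ dens[OF n_pos]] f_nonneg by simp

lemma emeasure_X_in:
  assumes "i < n" "A \<in> sets borel"
  shows "emeasure M {\<omega> \<in> space M. X i \<omega> \<in> A} = (\<integral>\<^sup>+x. ennreal (f x) * indicator A x \<partial>lborel)"
proof -
  have "{\<omega> \<in> space M. X i \<omega> \<in> A} = X i -` A \<inter> space M" by auto
  then show ?thesis using distributed_emeasure[OF dens[OF assms(1)], of A] assms(2) by simp
qed

lemma prob_X_in:
  "i < n \<Longrightarrow> A \<in> sets borel \<Longrightarrow> prob {\<omega> \<in> space M. X i \<omega> \<in> A} = enn2real (\<integral>\<^sup>+x. ennreal (f x) * indicator A x \<partial>lborel)"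
  using emeasure_X_in by (simp add: measure_def)

lemma prob_X_le: "i < n \<Longrightarrow> prob {\<omega> \<in> space M. X i \<omega> \<le> t} = F t"
  using prob_X_in[of i "{..t}"] prob_X_in[OF n_pos, of "{..t}"] unfolding F_def by simp

lemma prob_X_eq: "i < n \<Longrightarrow> prob {\<omega> \<in> space M. X i \<omega> = t} = 0"
proof -
  assume "i < n"
  have "(\<integral>\<^sup>+x. ennreal (f x) * indicator {t} x \<partial>lborel) = 0"
    by (rule nn_integral_0_iff_AE[THEN iffD2], measurable)
       (rule AE_mp[OF AE_lborel_singleton[of t]], auto)
  then show ?thesis using prob_X_in[OF \<open>i < n\<close>, of "{t}"] by simp
qed

lemma prob_X_ge: "i < n \<Longrightarrow> prob {\<omega> \<in> space M. t \<le> X i \<omega>} = G t"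
proof -
  assume i: "i < n"
  have "{\<omega> \<in> space M. X i \<omega> \<le> t} = {\<omega> \<in> space M. X i \<omega> < t} \<union> {\<omega> \<in> space M. X i \<omega> = t}"
    by auto
  then have "prob {\<omega> \<in> space M. X i \<omega> \<le> t}
      = prob {\<omega> \<in> space M. X i \<omega> < t} + prob {\<omega> \<in> space M. X i \<omega> = t}"
    using i by (simp only:) (subst finite_measure_Union, auto)
  then have "prob {\<omega> \<in> space M. X i \<omega> < t} = F t"
    using prob_X_le[OF i] prob_X_eq[OF i] by simp
  moreover have "{\<omega> \<in> space M. t \<le> X i \<omega>} = space M - {\<omega> \<in> space M. X i \<omega> < t}"
    by auto
  ultimately show ?thesis using i by (simp add: prob_compl G_def)
qed

lemma F_eq_cdf: "F = cdf (distr M borel (X 0))"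
  using n_pos by (auto simp: fun_eq_iff F_def cdf_def measure_distr intro!: arg_cong[where f=prob])

lemma G_continuous: "isCont G t"
proof -
  have "finite_borel_measure (distr M borel (X 0))"
    using n_pos real_distribution.finite_borel_measure_M by simp
  moreover have "measure (distr M borel (X 0)) {t} = prob {\<omega> \<in> space M. X 0 \<omega> = t}"
    using n_pos by (subst measure_distr) (auto simp: vimage_def Int_def conj_commute)
  ultimately have "isCont F t"
    unfolding F_eq_cdf using finite_borel_measure.isCont_cdf prob_X_eq[OF n_pos] by simp
  then show ?thesis unfolding G_def[abs_def] by (intro continuous_intros)
qed

lemma G_antimono: "a \<le> b \<Longrightarrow> G b \<le> G a"
  unfolding G_def F_def using n_pos by (auto intro!: finite_measure_mono)

lemma G_le_1: "G t \<le> 1"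
  unfolding G_def F_def by simp

lemma G_pos: "0 < G t"
proof -
  have "0 < G (max t 0)" using support_hi[of "max t 0"] unfolding G_def F_def by simp
  also have "\<dots> \<le> G t" by (rule G_antimono) simp
  finally show ?thesis .
qed

lemma G_nonpos: assumes "t \<le> 0" shows "G t = 1"
proof -
  have "(\<integral>\<^sup>+x. ennreal (f x) * indicator {..t} x \<partial>lborel) = 0"
    by (rule nn_integral_0_iff_AE[THEN iffD2], measurable)
       (rule AE_mp[OF AE_lborel_singleton[of 0]], use assms support_lo in \<open>auto simp: indicator_def\<close>)
  then show ?thesis using prob_X_in[OF n_pos, of "{..t}"] unfolding G_def F_def by simp
qed

lemma f_eq_h_G: "0 \<le> s \<Longrightarrow> f s = h s * G s"
  using G_pos[of s] unfolding h_def hazard_def G_def by simp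

lemma G_diff_eq_integral:
  assumes "a \<le> b"
  shows "ennreal (G a - G b) = (\<integral>\<^sup>+x. ennreal (f x) * indicator {a<..b} x \<partial>lborel)"
proof -
  have "{\<omega> \<in> space M. X 0 \<omega> \<le> b} = {\<omega> \<in> space M. X 0 \<omega> \<le> a} \<union> {\<omega> \<in> space M. X 0 \<omega> \<in> {a<..b}}"
    using assms by auto
  then have "prob {\<omega> \<in> space M. X 0 \<omega> \<le> b}
      = prob {\<omega> \<in> space M. X 0 \<omega> \<le> a} + prob {\<omega> \<in> space M. X 0 \<omega> \<in> {a<..b}}"
    using n_pos by (simp only:) (subst finite_measure_Union, auto)
  then have "G a - G b = prob {\<omega> \<in> space M. X 0 \<omega> \<in> {a<..b}}"
    unfolding G_def F_def by simp
  then show ?thesis using emeasure_X_in[OF n_pos, of "{a<..b}"] n_pos by (simp add: emeasure_eq_measure)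
qed

text \<open>The hazard rate is at least L, so on [a, b] the density f = h G is at least L G b.\<close>
lemma G_step:
  assumes "0 \<le> a" "a \<le> b"
  shows "G b * (1 + L * (b - a)) \<le> G a"
proof -
  have "ennreal (L * G b * (b - a)) = (\<integral>\<^sup>+x. ennreal (L * G b) * indicator {a<..b} x \<partial>lborel)"
    using assms L_pos G_pos[of b] by (simp add: nn_integral_cmult_indicator ennreal_mult)
  also have "\<dots> \<le> (\<integral>\<^sup>+x. ennreal (f x) * indicator {a<..b} x \<partial>lborel)"
  proof (intro nn_integral_mono)
    fix x
    show "ennreal (L * G b) * indicator {a<..b} x \<le> ennreal (f x) * indicator {a<..b} x"
    proof (cases "x \<in> {a<..b}")
      case True
      then have "L * G b \<le> h x * G x"
        using assms L_le_h[of x] G_antimono[of x b] G_pos[of b] L_pos by (intro mult_mono) auto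
      then show ?thesis using True f_eq_h_G[of x] assms by (simp add: ennreal_leI)
    qed simp
  qed
  also have "\<dots> = ennreal (G a - G b)" using G_diff_eq_integral[OF assms(2)] by simp
  finally have "L * G b * (b - a) \<le> G a - G b"
    using G_antimono[OF assms(2)] by (subst (asm) ennreal_le_iff) auto
  then show ?thesis by (simp add: algebra_simps)
qed

lemma G_step_iterate:
  assumes "0 \<le> a" "0 \<le> d"
  shows "G (a + real j * d) * (1 + L * d) ^ j \<le> G a"
proof (induction j)
  case (Suc j)
  have "G (a + real (Suc j) * d) * (1 + L * d) \<le> G (a + real j * d)"
    using G_step[of "a + real j * d" "a + real (Suc j) * d"] assms by (simp add: algebra_simps)
  then have "(G (a + real (Suc j) * d) * (1 + L * d)) * (1 + L * d) ^ j \<le> G (a + real j * d) * (1 + L * d) ^ j"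
    using assms L_pos by (intro mult_right_mono) simp_all
  then show ?case using Suc by (simp add: mult.assoc)
qed simp

lemma G_exp_decay:
  assumes "0 \<le> a" "a \<le> b"
  shows "G b * exp (L * (b - a)) \<le> G a"
proof -
  define x where "x = L * (b - a)"
  have le: "G b * (1 + x / real N) ^ N \<le> G a" if "N \<ge> 1" for N :: nat
    using G_step_iterate[of a "(b - a) / real N" N] assms that unfolding x_def by simp
  have "(\<lambda>N. G b * (1 + x / real N) ^ N) \<longlonglongrightarrow> G b * exp x"
    by (intro tendsto_mult tendsto_const tendsto_exp_limit_sequentially)
  then show ?thesis unfolding x_def[symmetric]
    by (rule LIMSEQ_le_const2) (use le in auto)
qed

lemma G_strict_antimono:
  assumes "0 \<le> a" "a < b"
  shows "G b < G a"
proof -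
  have "G b < G b * (1 + L * (b - a))" using G_pos[of b] L_pos assms by (simp add: algebra_simps)
  also have "\<dots> \<le> G a" using G_step assms by simp
  finally show ?thesis .
qed

lemma G_attains:
  assumes "0 < q" "q < 1"
  obtains t where "0 < t" "G t = q"
proof -
  define B where "B = - ln q / L"
  have B: "0 \<le> B" using assms L_pos unfolding B_def by (simp add: divide_nonpos_pos)
  have "G B \<le> exp (- (L * B))"
    using G_exp_decay[OF order.refl B] G_nonpos[of 0] by (simp add: exp_minus field_simps)
  also have "\<dots> = q" using assms L_pos unfolding B_def by simp
  finally have "G B \<le> q" .
  moreover have "q \<le> G 0" using G_nonpos[of 0] assms by simp
  moreover have "continuous_on {0..B} G" by (intro continuous_at_imp_continuous_on ballI G_continuous)
  ultimately obtain t where "0 \<le> t" "G t = q"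
    using IVT2'[of G B q 0, OF _ _ B] by auto
  moreover have "t \<noteq> 0" using \<open>G t = q\<close> assms G_nonpos[of 0] by auto
  ultimately show thesis by (intro that[of t]) auto
qed

lemma G_le_iff:
  assumes "0 < t"
  shows "G y \<le> G t \<longleftrightarrow> t \<le> y"
proof
  assume "G y \<le> G t"
  show "t \<le> y"
  proof (rule ccontr)
    assume "\<not> t \<le> y"
    then have "y < t" by simp
    show False
    proof (cases "0 \<le> y")
      case True then show ?thesis using G_strict_antimono[OF True \<open>y < t\<close>] \<open>G y \<le> G t\<close> by simp
    next
      case False then show ?thesis
        using G_nonpos[of y] G_strict_antimono[of 0 t] G_nonpos[of 0] assms \<open>G y \<le> G t\<close> by simp
    qed
  qed
qed (rule G_antimono)

lemma G_measurable[measurable]: "G \<in> borel_measurable borel"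
proof -
  have "mono F" using G_antimono by (auto simp: mono_def G_def)
  then have "F \<in> borel_measurable borel" by (rule borel_measurable_mono)
  then show ?thesis unfolding G_def[abs_def] by measurable
qed

definition Y :: "'a \<Rightarrow> real" where "Y \<omega> = order_stat n k (\<lambda>i. X i \<omega>)"
definition Q :: "'a \<Rightarrow> real" where "Q \<omega> = G (Y \<omega>)"

lemma le_Y_iff_sum:
  "t \<le> Y \<omega> \<longleftrightarrow> real k \<le> (\<Sum>i<n. if t \<le> X i \<omega> then 1 else 0)"
proof -
  have "(\<Sum>i<n. if t \<le> X i \<omega> then 1 else 0) = real (card {i\<in>{..<n}. t \<le> X i \<omega>})"
    by (simp add: sum.If_cases Int_def conj_commute)
  then show ?thesis unfolding Y_def le_order_stat_iff_card[OF k1 k_le_n] by simp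
qed

lemma Y_measurable[measurable]: "Y \<in> borel_measurable M"
proof (subst borel_measurable_iff_ge, intro allI)
  fix t
  have "{\<omega> \<in> space M. t \<le> Y \<omega>} = {\<omega> \<in> space M. real k \<le> (\<Sum>i<n. if t \<le> X i \<omega> then 1 else 0)}"
    using le_Y_iff_sum by auto
  also have "\<dots> \<in> sets M" by measurable
  finally show "{\<omega> \<in> space M. t \<le> Y \<omega>} \<in> sets M" .
qed

lemma prob_le_Y: "prob {\<omega> \<in> space M. t \<le> Y \<omega>} = binomial_tail n k (G t)"
proof -
  define Z where "Z i \<omega> = (if t \<le> X i \<omega> then 1 else 0 :: real)" for i \<omega>
  define S where "S \<omega> = (\<Sum>i<n. Z i \<omega>)" for \<omega>
  have [measurable]: "S \<in> borel_measurable M" unfolding S_def Z_def by measurable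
  have Z_indep: "indep_vars (\<lambda>_. borel) Z {..<n}"
    unfolding Z_def by (rule indep_vars_compose2[OF indep]) measurable
  have S_nat: "\<exists>m\<le>n. S \<omega> = real m" for \<omega>
  proof -
    have "S \<omega> = real (card {i\<in>{..<n}. t \<le> X i \<omega>})"
      unfolding S_def Z_def by (simp add: sum.If_cases Int_def conj_commute)
    moreover have "card {i\<in>{..<n}. t \<le> X i \<omega>} \<le> n"
      by (rule order.trans[OF card_mono[of "{..<n}"]]) auto
    ultimately show ?thesis by blast
  qed
  have "t \<le> Y \<omega> \<longleftrightarrow> (\<exists>j\<in>{k..n}. S \<omega> = real j)" for \<omega>
    using S_nat[of \<omega>] le_Y_iff_sum[of t \<omega>] unfolding S_def Z_def by auto
  then have "{\<omega> \<in> space M. t \<le> Y \<omega>} = (\<Union>j\<in>{k..n}. {\<omega> \<in> space M. S \<omega> = real j})"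
    by blast
  then have "prob {\<omega> \<in> space M. t \<le> Y \<omega>} = (\<Sum>j\<in>{k..n}. prob {\<omega> \<in> space M. S \<omega> = real j})"
    by (simp only:) (rule finite_measure_finite_Union, auto simp: disjoint_family_on_def)
  also have "\<dots> = binomial_tail n k (G t)"
  proof -
    have "{\<omega> \<in> space M. Z i \<omega> = 1} = {\<omega> \<in> space M. t \<le> X i \<omega>}" for i
      unfolding Z_def by auto
    then have "prob {\<omega> \<in> space M. S \<omega> = real j} = real (n choose j) * G t ^ j * (1 - G t) ^ (n - j)" for j
      using prob_sum_indep_bernoulli[OF _ Z_indep, of "G t" j] prob_X_ge unfolding S_def
      by (simp add: Z_def)
    then show ?thesis unfolding binomial_tail_def by simp
  qed
  finally show ?thesis .
qed

lemma Q_measurable[measurable]: "Q \<in> borel_measurable M"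
  unfolding Q_def[abs_def] by measurable

lemma Q_pos: "0 < Q \<omega>" unfolding Q_def by (rule G_pos)
lemma Q_le_1: "Q \<omega> \<le> 1" unfolding Q_def by (rule G_le_1)

lemma prob_Q_le: "prob {\<omega> \<in> space M. Q \<omega> \<le> q} = binomial_tail n k (max 0 (min q 1))"
proof -
  consider "q \<le> 0" | "1 \<le> q" | "0 < q" "q < 1" by linarith
  then show ?thesis
  proof cases
    case 1
    then have "q < Q \<omega>" for \<omega> using Q_pos[of \<omega>] by linarith
    then have "{\<omega> \<in> space M. Q \<omega> \<le> q} = {}" by (auto simp: not_le)
    then show ?thesis using 1 binomial_tail_0[OF k1] by (simp del: Collect_empty_eq)
  next
    case 2
    then have "{\<omega> \<in> space M. Q \<omega> \<le> q} = space M" using Q_le_1 by (auto intro: order.trans)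
    then show ?thesis using 2 binomial_tail_1[OF k_le_n] by (simp add: prob_space)
  next
    case 3
    then obtain t where t: "0 < t" "G t = q" by (rule G_attains)
    then have "{\<omega> \<in> space M. Q \<omega> \<le> q} = {\<omega> \<in> space M. t \<le> Y \<omega>}"
      unfolding Q_def using G_le_iff[OF t(1)] by auto
    then show ?thesis using prob_le_Y[of t] t 3 by simp
  qed
qed

lemma distr_Q: "distr M borel Q = beta_distr n k"
proof (rule cdf_unique)
  show "real_distribution (distr M borel Q)" by (rule real_distribution_distr) simp
  show "real_distribution (beta_distr n k)" by (rule real_distribution_beta_distr[OF k1 k_le_n])
  show "cdf (distr M borel Q) = cdf (beta_distr n k)"
  proof
    fix q
    have "cdf (distr M borel Q) q = prob {\<omega> \<in> space M. Q \<omega> \<le> q}"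
      unfolding cdf_def by (subst measure_distr) (auto intro!: arg_cong[where f=prob])
    also have "\<dots> = cdf (beta_distr n k) q"
    proof -
      have "0 \<le> binomial_tail n k (max 0 (min q 1))" using prob_Q_le[of q] by (metis measure_nonneg)
      then show ?thesis
        using prob_Q_le[of q] emeasure_beta_distr_atMost[OF k1 k_le_n, of q]
        unfolding cdf_def measure_def by simp
    qed
    finally show "cdf (distr M borel Q) q = cdf (beta_distr n k) q" .
  qed
qed

lemma nn_integral_Q_powr:
  assumes "real k + a > 0"
  shows "(\<integral>\<^sup>+\<omega>. ennreal (Q \<omega> powr a) \<partial>M) = ennreal (\<Prod>j\<le>n-k. (real k + real j) / (real k + real j + a))"
proof -
  have "(\<integral>\<^sup>+\<omega>. ennreal (Q \<omega> powr a) \<partial>M) = (\<integral>\<^sup>+x. ennreal (x powr a) \<partial>distr M borel Q)"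
    by (subst nn_integral_distr) auto
  then show ?thesis unfolding distr_Q using nn_integral_beta_distr_powr[OF k1 k_le_n assms] by simp
qed

lemma
  assumes "real k + a > 0"
  shows integrable_Q_powr: "integrable M (\<lambda>\<omega>. Q \<omega> powr a)"
    and integral_Q_powr: "(\<integral>\<omega>. Q \<omega> powr a \<partial>M) = (\<Prod>j\<le>n-k. (real k + real j) / (real k + real j + a))"
proof -
  have "0 \<le> (\<Prod>j\<le>n-k. (real k + real j) / (real k + real j + a))"
    using assms by (intro prod_nonneg) (auto intro!: divide_nonneg_pos)
  then show "integrable M (\<lambda>\<omega>. Q \<omega> powr a)" "(\<integral>\<omega>. Q \<omega> powr a \<partial>M) = (\<Prod>j\<le>n-k. (real k + real j) / (real k + real j + a))"
    using nn_integral_Q_powr[OF assms]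
    by (auto intro!: integrableI_nonneg simp: integral_eq_nn_integral)
qed

definition S :: "'a \<Rightarrow> real" where "S \<omega> = - ln (Q \<omega>)"
definition D :: "real \<Rightarrow> real" where "D y = - ln (G y) / L - y"

lemma S_measurable[measurable]: "S \<in> borel_measurable M" unfolding S_def[abs_def] by measurable
lemma D_measurable[measurable]: "D \<in> borel_measurable borel" unfolding D_def[abs_def] by measurable

lemma S_nonneg: "0 \<le> S \<omega>"
  unfolding S_def using Q_pos[of \<omega>] Q_le_1[of \<omega>] by simp

lemma exp_mult_S: "exp (a * S \<omega>) = Q \<omega> powr (- a)"
  unfolding S_def using Q_pos[of \<omega>] by (simp add: powr_def)

lemma S_le_Q_powr: "0 < a \<Longrightarrow> S \<omega> \<le> Q \<omega> powr (- a) / a"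
  using exp_ge_add_one_self[of "a * S \<omega>"] exp_mult_S[of a \<omega>] by (simp add: field_simps)

lemma S_div_L_eq: "S \<omega> / L = Y \<omega> + D (Y \<omega>)"
  unfolding S_def D_def Q_def by simp

lemma D_mono:
  assumes "0 \<le> a" "a \<le> b"
  shows "D a \<le> D b"
proof -
  have "ln (G b * exp (L * (b - a))) \<le> ln (G a)"
    using G_exp_decay[OF assms] G_pos[of b] G_pos[of a] by simp
  then have "ln (G b) + L * (b - a) \<le> ln (G a)"
    using G_pos[of b] by (simp add: ln_mult)
  then have "- ln (G a) / L \<le> (- ln (G b) - L * (b - a)) / L"
    using L_pos by (intro divide_right_mono) auto
  also have "\<dots> = - ln (G b) / L - (b - a)" using L_pos by (simp add: field_simps)
  finally show ?thesis unfolding D_def by simp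
qed

lemma D_0: "D 0 = 0" unfolding D_def using G_nonpos[of 0] by simp

lemma Y_nonneg_AE: "AE \<omega> in M. 0 \<le> Y \<omega>"
proof -
  have "AE \<omega> in M. \<omega> \<in> {\<omega> \<in> space M. 0 \<le> Y \<omega>}"
    by (rule AE_prob_1) (use prob_le_Y[of 0] G_nonpos[of 0] binomial_tail_1[OF k_le_n] in simp)
  then show ?thesis by eventually_elim auto
qed

lemma D_nonneg_AE: "AE \<omega> in M. 0 \<le> D (Y \<omega>)"
  using Y_nonneg_AE by eventually_elim (use D_mono[of 0] D_0 in auto)

lemma integrable_S: "integrable M S"
proof (rule Bochner_Integration.integrable_bound)
  show "integrable M (\<lambda>\<omega>. 2 * Q \<omega> powr (- (1/2)))"
    using integrable_Q_powr[of "- (1/2)"] k1 by simp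
  show "AE \<omega> in M. norm (S \<omega>) \<le> norm (2 * Q \<omega> powr (- (1/2)))"
    using S_le_Q_powr[of "1/2"] S_nonneg by (intro AE_I2) (simp add: mult.commute)
qed simp

lemma integrable_Y: "integrable M Y"
proof (rule Bochner_Integration.integrable_bound)
  show "integrable M (\<lambda>\<omega>. S \<omega> / L)" using integrable_S by simp
  show "AE \<omega> in M. norm (Y \<omega>) \<le> norm (S \<omega> / L)"
    using Y_nonneg_AE D_nonneg_AE
    by eventually_elim (use S_div_L_eq S_nonneg L_pos in \<open>auto simp: abs_of_nonneg\<close>)
qed simp

lemma integrable_D: "integrable M (\<lambda>\<omega>. D (Y \<omega>))"
proof -
  have "(\<lambda>\<omega>. D (Y \<omega>)) = (\<lambda>\<omega>. S \<omega> / L - Y \<omega>)" using S_div_L_eq by (simp add: fun_eq_iff)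
  then show ?thesis using integrable_S integrable_Y by simp
qed

text \<open>In fact E[S] equals this harmonic sum; the lower bound follows from Jensen's
  inequality applied to exp(- \<nu> S) = Q powr \<nu> as \<nu> tends to 0.\<close>
lemma harmonic_le_integral_S: "(\<Sum>j\<le>n-k. 1 / (real k + real j)) \<le> (\<integral>\<omega>. S \<omega> \<partial>M)"
proof -
  define H where "H = (\<Sum>j\<le>n-k. 1 / (real k + real j))"
  define ES where "ES = (\<integral>\<omega>. S \<omega> \<partial>M)"
  have approx: "H - 2 * \<nu> \<le> ES" if \<nu>: "0 < \<nu>" "\<nu> \<le> 1" for \<nu>
  proof -
    have kv: "real k + \<nu> > 0" using \<nu> by simp
    have exp_S: "(\<lambda>\<omega>. exp (- \<nu> * S \<omega>)) = (\<lambda>\<omega>. Q \<omega> powr \<nu>)"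
      using exp_mult_S[of "- \<nu>"] by (simp add: fun_eq_iff)
    have "exp (\<integral>\<omega>. - \<nu> * S \<omega> \<partial>M) \<le> (\<integral>\<omega>. exp (- \<nu> * S \<omega>) \<partial>M)"
      by (rule exp_integral_le_integral_exp) (use integrable_S integrable_Q_powr[OF kv] exp_S in simp_all)
    then have "exp (- \<nu> * ES) \<le> (\<integral>\<omega>. exp (- \<nu> * S \<omega>) \<partial>M)"
      unfolding ES_def by simp
    also have "\<dots> = (\<Prod>j\<le>n-k. (real k + real j) / (real k + real j + \<nu>))"
      using integral_Q_powr[OF kv] exp_S by simp
    finally have "- \<nu> * ES \<le> ln (\<Prod>j\<le>n-k. (real k + real j) / (real k + real j + \<nu>))"
      using k1 \<nu> by (subst ln_ge_iff) (auto intro!: prod_pos)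
    also have "\<dots> = (\<Sum>j\<le>n-k. ln ((real k + real j) / (real k + real j + \<nu>)))"
      using k1 \<nu> by (subst ln_prod) auto
    also have "\<dots> \<le> - \<nu> * H + 2 * \<nu>\<^sup>2"
      unfolding H_def by (rule sum_ln_ratio_le[OF k1 \<nu>])
    finally have "\<nu> * (H - 2 * \<nu>) \<le> \<nu> * ES" by (simp add: power2_eq_square algebra_simps)
    then show ?thesis using \<nu> by simp
  qed
  show ?thesis
  proof (rule ccontr)
    assume "\<not> ?thesis"
    then have "ES < H" unfolding H_def ES_def by simp
    then show False
      using approx[of "min 1 ((H - ES) / 4)"] by (cases "4 \<le> H - ES") (simp_all add: min_def field_simps)
  qed
qed

lemma
  assumes "0 < \<mu>" "\<mu> < real k"
  shows integrable_exp_S_centered: "integrable M (\<lambda>\<omega>. exp (\<mu> * (S \<omega> - (\<integral>\<omega>. S \<omega> \<partial>M))))"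
    and integral_exp_S_centered: "(\<integral>\<omega>. exp (\<mu> * (S \<omega> - (\<integral>\<omega>. S \<omega> \<partial>M))) \<partial>M)
      = exp (- \<mu> * (\<integral>\<omega>. S \<omega> \<partial>M)) * (\<Prod>j\<le>n-k. (real k + real j) / (real k + real j - \<mu>))"
proof -
  have eq: "(\<lambda>\<omega>. exp (\<mu> * (S \<omega> - (\<integral>\<omega>. S \<omega> \<partial>M))))
      = (\<lambda>\<omega>. exp (- \<mu> * (\<integral>\<omega>. S \<omega> \<partial>M)) * Q \<omega> powr (- \<mu>))"
    by (simp add: fun_eq_iff exp_mult_S[symmetric] exp_add[symmetric] algebra_simps)
  show "integrable M (\<lambda>\<omega>. exp (\<mu> * (S \<omega> - (\<integral>\<omega>. S \<omega> \<partial>M))))"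
    unfolding eq using integrable_Q_powr[of "- \<mu>"] assms by simp
  show "(\<integral>\<omega>. exp (\<mu> * (S \<omega> - (\<integral>\<omega>. S \<omega> \<partial>M))) \<partial>M)
      = exp (- \<mu> * (\<integral>\<omega>. S \<omega> \<partial>M)) * (\<Prod>j\<le>n-k. (real k + real j) / (real k + real j - \<mu>))"
    unfolding eq using integral_Q_powr[of "- \<mu>"] assms by simp
qed

lemma ln_mgf_S_le:
  assumes "0 < \<mu>" "\<mu> < real k"
  shows "ln (\<integral>\<omega>. exp (\<mu> * (S \<omega> - (\<integral>\<omega>. S \<omega> \<partial>M))) \<partial>M) \<le> \<mu>\<^sup>2 / (real k - \<mu>)"
proof -
  define ES where "ES = (\<integral>\<omega>. S \<omega> \<partial>M)"
  have pos: "0 < real k + real j - \<mu>" for j using assms by simp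
  have "ln (\<integral>\<omega>. exp (\<mu> * (S \<omega> - ES)) \<partial>M)
      = - \<mu> * ES + (\<Sum>j\<le>n-k. ln ((real k + real j) / (real k + real j - \<mu>)))"
    unfolding ES_def integral_exp_S_centered[OF assms] using pos k1
    by (simp add: ln_mult prod_pos ln_prod less_imp_neq[symmetric])
  also have "\<dots> \<le> - \<mu> * (\<Sum>j\<le>n-k. 1 / (real k + real j))
      + (\<Sum>j\<le>n-k. ln ((real k + real j) / (real k + real j - \<mu>)))"
    using harmonic_le_integral_S assms unfolding ES_def by simp
  also have "\<dots> = (\<Sum>j\<le>n-k. ln ((real k + real j) / (real k + real j - \<mu>)) - \<mu> / (real k + real j))"
    by (simp add: sum_subtractf sum_distrib_left sum_negf)
  also have "\<dots> \<le> \<mu>\<^sup>2 / (real k - \<mu>)"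
    by (rule sum_ln_mgf_le[OF k1 assms])
  finally show ?thesis unfolding ES_def .
qed

text \<open>Both integrands are dominated by multiples of powers Q powr (- mu) with mu < k.\<close>
lemma
  assumes l: "0 < l" and lk: "2 * (l / L) < real k"
  shows integrable_exp_Y: "integrable M (\<lambda>\<omega>. exp (l * (Y \<omega> - b)))"
    and integrable_exp_Y_mult_D: "integrable M (\<lambda>\<omega>. exp (l * (Y \<omega> - b)) * D (Y \<omega>))"
proof -
  define \<mu> where "\<mu> = l / L"
  have \<mu>: "0 < \<mu>" "2 * \<mu> < real k" using l lk L_pos unfolding \<mu>_def by auto
  have exp_le: "AE \<omega> in M. exp (l * (Y \<omega> - b)) \<le> exp (- l * b) * Q \<omega> powr (- \<mu>)"
    using D_nonneg_AE
  proof eventually_elim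
    case (elim \<omega>)
    then have "l * Y \<omega> \<le> \<mu> * S \<omega>"
      using S_div_L_eq[of \<omega>] l L_pos unfolding \<mu>_def by (simp add: field_simps)
    then have "exp (l * (Y \<omega> - b)) \<le> exp (\<mu> * S \<omega> + (- l * b))" by (simp add: algebra_simps)
    then show ?case unfolding exp_add exp_mult_S by (simp add: mult.commute)
  qed
  show "integrable M (\<lambda>\<omega>. exp (l * (Y \<omega> - b)))"
  proof (rule Bochner_Integration.integrable_bound)
    show "integrable M (\<lambda>\<omega>. exp (- l * b) * Q \<omega> powr (- \<mu>))"
      using integrable_Q_powr[of "- \<mu>"] \<mu> by simp
    show "AE \<omega> in M. norm (exp (l * (Y \<omega> - b))) \<le> norm (exp (- l * b) * Q \<omega> powr (- \<mu>))"
      using exp_le by eventually_elim simp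
  qed simp
  show "integrable M (\<lambda>\<omega>. exp (l * (Y \<omega> - b)) * D (Y \<omega>))"
  proof (rule Bochner_Integration.integrable_bound)
    show "integrable M (\<lambda>\<omega>. exp (- l * b) / (\<mu> * L) * Q \<omega> powr (- (2 * \<mu>)))"
      using integrable_Q_powr[of "- (2 * \<mu>)"] \<mu> by simp
    show "AE \<omega> in M. norm (exp (l * (Y \<omega> - b)) * D (Y \<omega>))
        \<le> norm (exp (- l * b) / (\<mu> * L) * Q \<omega> powr (- (2 * \<mu>)))"
      using exp_le D_nonneg_AE Y_nonneg_AE
    proof eventually_elim
      case (elim \<omega>)
      have "D (Y \<omega>) \<le> S \<omega> / L" using S_div_L_eq elim by simp
      also have "\<dots> \<le> (Q \<omega> powr (- \<mu>) / \<mu>) / L"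
        using S_le_Q_powr[OF \<mu>(1)] L_pos by (intro divide_right_mono) auto
      finally have "exp (l * (Y \<omega> - b)) * D (Y \<omega>)
          \<le> exp (- l * b) * Q \<omega> powr (- \<mu>) * (Q \<omega> powr (- \<mu>) / \<mu> / L)"
        using elim by (intro mult_mono) auto
      also have "\<dots> = exp (- l * b) / (\<mu> * L) * Q \<omega> powr (- (2 * \<mu>))"
        by (simp add: powr_add[symmetric])
      finally show ?case using elim \<mu> L_pos by (simp add: abs_of_nonneg)
    qed
  qed simp
qed

text \<open>Since Y = S / L - D Y with D monotone, Chebyshev's association inequality shows that the
  factor exp(- l D Y) only lowers the exponential moment of l S / L.\<close>
lemma mgf_Y_le_mgf_S:
  assumes l: "0 < l" and lk: "2 * (l / L) < real k"
  defines "EY \<equiv> \<integral>\<omega>. Y \<omega> \<partial>M" and "ES \<equiv> \<integral>\<omega>. S \<omega> \<partial>M"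
  shows "(\<integral>\<omega>. exp (l * (Y \<omega> - EY)) \<partial>M) \<le> (\<integral>\<omega>. exp (l / L * (S \<omega> - ES)) \<partial>M)"
proof -
  define \<mu> where "\<mu> = l / L"
  define ED where "ED = (\<integral>\<omega>. D (Y \<omega>) \<partial>M)"
  define g where "g y = exp (l * (y - EY))" for y
  have \<mu>: "0 < \<mu>" "\<mu> < real k" using l lk L_pos unfolding \<mu>_def by auto
  have "ES / L = (\<integral>\<omega>. S \<omega> / L \<partial>M)" unfolding ES_def by simp
  also have "\<dots> = (\<integral>\<omega>. Y \<omega> + D (Y \<omega>) \<partial>M)" using S_div_L_eq by simp
  finally have ES_eq: "ES / L = EY + ED"
    unfolding EY_def ED_def using integrable_Y integrable_D by simp
  have int_g: "integrable M (\<lambda>\<omega>. g (Y \<omega>))"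
    unfolding g_def by (rule integrable_exp_Y[OF l lk])
  have int_gDc: "integrable M (\<lambda>\<omega>. g (Y \<omega>) * (D (Y \<omega>) - ED))"
    using integrable_exp_Y_mult_D[OF l lk] int_g unfolding g_def by (simp add: algebra_simps)
  have cov: "0 \<le> (\<integral>\<omega>. g (Y \<omega>) * (D (Y \<omega>) - ED) \<partial>M)"
    unfolding ED_def g_def using l
    by (intro covariance_monotone_nonneg[OF Y_nonneg_AE _ D_mono integrable_exp_Y_mult_D[OF l lk]
          integrable_exp_Y[OF l lk] integrable_D]) simp
  have pointwise: "g (Y \<omega>) + l * (g (Y \<omega>) * (D (Y \<omega>) - ED)) \<le> exp (\<mu> * (S \<omega> - ES))" for \<omega>
  proof -
    have "\<mu> * (S \<omega> - ES) = l * (Y \<omega> - EY) + l * (D (Y \<omega>) - ED)"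
      using S_div_L_eq[of \<omega>] ES_eq L_pos unfolding \<mu>_def by (simp add: field_simps)
    then have "exp (\<mu> * (S \<omega> - ES)) = g (Y \<omega>) * exp (l * (D (Y \<omega>) - ED))"
      unfolding g_def by (simp add: exp_add)
    moreover have "g (Y \<omega>) * (1 + l * (D (Y \<omega>) - ED)) \<le> g (Y \<omega>) * exp (l * (D (Y \<omega>) - ED))"
      by (intro mult_left_mono exp_ge_add_one_self) (simp add: g_def)
    ultimately show ?thesis by (simp add: algebra_simps)
  qed
  have "(\<integral>\<omega>. g (Y \<omega>) \<partial>M) \<le> (\<integral>\<omega>. g (Y \<omega>) \<partial>M) + l * (\<integral>\<omega>. g (Y \<omega>) * (D (Y \<omega>) - ED) \<partial>M)"
    using cov l by simp
  also have "\<dots> = (\<integral>\<omega>. g (Y \<omega>) + l * (g (Y \<omega>) * (D (Y \<omega>) - ED)) \<partial>M)"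
    using int_g int_gDc by simp
  also have "\<dots> \<le> (\<integral>\<omega>. exp (\<mu> * (S \<omega> - ES)) \<partial>M)"
    using integrable_exp_S_centered[OF \<mu>] int_g int_gDc pointwise
    unfolding ES_def by (intro integral_mono) auto
  finally show ?thesis unfolding g_def \<mu>_def .
qed

lemma mgf_bound:
  assumes "0 \<le> l" "l < real k * L / 2"
  shows "integrable M (\<lambda>\<omega>. exp (l * (Y \<omega> - (\<integral>\<omega>. Y \<omega> \<partial>M)))) \<and>
    ln (\<integral>\<omega>. exp (l * (Y \<omega> - (\<integral>\<omega>. Y \<omega> \<partial>M))) \<partial>M)
      \<le> l\<^sup>2 * (2 / (real k * L\<^sup>2)) / (2 * (1 - 2 / (real k * L) * l))"
proof (cases "l = 0")
  case False
  define \<mu> where "\<mu> = l / L"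
  define EY where "EY = (\<integral>\<omega>. Y \<omega> \<partial>M)"
  have l: "0 < l" "2 * (l / L) < real k" using assms False L_pos by (auto simp: field_simps)
  then have \<mu>: "0 < \<mu>" "\<mu> < real k" "2 * \<mu> < real k" unfolding \<mu>_def using L_pos by auto
  note int = integrable_exp_Y[OF l, of EY] and le = mgf_Y_le_mgf_S[OF l]
  have "0 < (\<integral>\<omega>. exp (l * (Y \<omega> - EY)) \<partial>M)"
    using expectation_less[of "\<lambda>\<omega>. - exp (l * (Y \<omega> - EY))" 0] int unfolding EY_def by simp
  then have "ln (\<integral>\<omega>. exp (l * (Y \<omega> - EY)) \<partial>M) \<le> ln (\<integral>\<omega>. exp (\<mu> * (S \<omega> - (\<integral>\<omega>. S \<omega> \<partial>M))) \<partial>M)"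
    using le unfolding EY_def \<mu>_def by simp
  also have "\<dots> \<le> \<mu>\<^sup>2 / (real k - \<mu>)" by (rule ln_mgf_S_le[OF \<mu>(1,2)])
  also have "\<dots> \<le> \<mu>\<^sup>2 / (real k - 2 * \<mu>)" using \<mu> by (intro divide_left_mono) auto
  also have "\<dots> = l\<^sup>2 * (2 / (real k * L\<^sup>2)) / (2 * (1 - 2 / (real k * L) * l))"
  proof -
    have "real k * L - 2 * l > 0" using l L_pos by (simp add: field_simps)
    then show ?thesis unfolding \<mu>_def using L_pos k1 by (simp add: field_simps power2_eq_square)
  qed
  finally show ?thesis using int unfolding EY_def by simp
qed (simp add: prob_space)

end

theorem lemma1:
  fixes M :: "'a measure" and X :: "nat \<Rightarrow> 'a \<Rightarrow> real" and f :: "real \<Rightarrow> real" and L :: real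
    and n k :: nat
  assumes prob: "prob_space M"
    and n2: "n \<ge> 2" and k1: "1 \<le> k" and kn: "k \<le> n - 1"
    and indep: "prob_space.indep_vars M (\<lambda>_. borel) X {..<n}"
    and dens: "\<And>i. i < n \<Longrightarrow> distributed M lborel (X i) (\<lambda>t. ennreal (f t))"
    and f_nonneg: "\<And>t. f t \<ge> 0"
    and support_lo: "\<And>t. t < 0 \<Longrightarrow> f t = 0"
    and support_hi: "\<And>t. t \<ge> 0 \<Longrightarrow> measure M {\<omega> \<in> space M. X 0 \<omega> \<le> t} < 1"
    and IHR: "\<And>x1 x2. 0 \<le> x2 \<Longrightarrow> x2 \<le> x1 \<Longrightarrow>
        hazard f (\<lambda>t. measure M {\<omega> \<in> space M. X 0 \<omega> \<le> t}) x2
          \<le> hazard f (\<lambda>t. measure M {\<omega> \<in> space M. X 0 \<omega> \<le> t}) x1"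
    and L_def: "L = (INF x\<in>{0..}. hazard f (\<lambda>t. measure M {\<omega> \<in> space M. X 0 \<omega> \<le> t}) x)"
    and L_pos: "L > 0"
  defines "Y \<equiv> (\<lambda>\<omega>. order_stat n k (\<lambda>i. X i \<omega>))"
    and "v \<equiv> 2 / (real k * L\<^sup>2)"
    and "c \<equiv> 2 / (real k * L)"
  shows "integrable M Y \<and>
    (\<forall>l. 0 \<le> l \<and> l < 1 / c \<longrightarrow>
           integrable M (\<lambda>\<omega>. exp (l * (Y \<omega> - integral\<^sup>L M Y))) \<and>
           ln (integral\<^sup>L M (\<lambda>\<omega>. exp (l * (Y \<omega> - integral\<^sup>L M Y))))
             \<le> l\<^sup>2 * v / (2 * (1 - c * l))) \<and>
    (\<forall>g. 0 \<le> g \<longrightarrow>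
           measure M {\<omega> \<in> space M. Y \<omega> - integral\<^sup>L M Y \<ge> sqrt (2 * v * g) + c * g}
             \<le> exp (- g))"
proof -
  have "L \<le> hazard f (\<lambda>t. measure M {\<omega> \<in> space M. X 0 \<omega> \<le> t}) x" if "0 \<le> x" for x
  proof -
    have "bdd_below ((\<lambda>x. hazard f (\<lambda>t. measure M {\<omega> \<in> space M. X 0 \<omega> \<le> t}) x) ` {0..})"
      using f_nonneg prob_space.prob_le_1[OF prob]
      by (intro bdd_belowI[of _ 0]) (auto simp: hazard_def)
    then show ?thesis unfolding L_def using that by (intro cINF_lower) auto
  qed
  moreover have "k \<le> n" using kn by simp
  ultimately interpret I: bounded_hazard_samples M X f L n k
    using prob k1 indep dens f_nonneg support_lo support_hi L_pos
    by (intro bounded_hazard_samples.intro)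
  have Y_eq: "Y = I.Y" unfolding Y_def I.Y_def[abs_def] ..
  have c_inv: "1 / c = real k * L / 2" unfolding c_def by simp
  have mgf: "integrable M (\<lambda>\<omega>. exp (l * (Y \<omega> - integral\<^sup>L M Y))) \<and>
      ln (integral\<^sup>L M (\<lambda>\<omega>. exp (l * (Y \<omega> - integral\<^sup>L M Y)))) \<le> l\<^sup>2 * v / (2 * (1 - c * l))"
    if "0 \<le> l" "l < 1 / c" for l
    using I.mgf_bound[of l] that unfolding Y_eq c_inv v_def c_def by simp
  have "0 < v" "0 < c" using L_pos k1 unfolding v_def c_def by auto
  then have "measure M {\<omega> \<in> space M. sqrt (2 * v * g) + c * g \<le> Y \<omega> - integral\<^sup>L M Y} \<le> exp (- g)"
    if "0 \<le> g" for g
    using I.sub_gamma_tail_bound[OF _ _ that, of v c "\<lambda>\<omega>. Y \<omega> - integral\<^sup>L M Y"] mgf by simp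
  then show ?thesis using I.integrable_Y mgf unfolding Y_eq by blast
qed

end
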